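(* Let $p=\langle P_0,\dots,P_k\rangle$ be a path in an MPDAG $\mathcal G$. Then $p$ is possibly causal if and only if $\mathcal G$ contains no directed path $P_i\leftarrow\cdots\leftarrow P_j$ (i.e. no directed path from $P_j$ to $P_i$) for any $0\le i<j\le k$.
   Context: An MPDAG $\mathcal G$ is a graph with directed ($\to$) and undirected ($-$) edges and no directed cycles, obtained from a CPDAG (the graph representing a Markov equivalence class of DAGs) by orienting some undirected edges and closing under Meek's orientation rules R1–R4; $[\mathcal G]$ is the set of DAGs with the same nodes, adjacencies and directed edges as $\mathcal G$. A path is a sequence of distinct nodes with successive nodes adjacent; a directed path is of the form $A\to\cdots\to B$. A path $\langle V_1,\dots,V_k\rangle$ is possibly causal if $\mathcal G$ contains no edge $V_i\leftarrow V_j$ with $1\le i<j\le k$. *)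

theory Defs
  imports Main
begin

text \<open>A (partially directed) graph on node set nodes, with directed edges
  (a,b) meaning a \<rightarrow> b, and undirected edges stored symmetrically:
  (a,b) and (b,a) both in uedges mean a - b.\<close>

record 'a pdag =
  nodes  :: "'a set"
  dedges :: "('a \<times> 'a) set"
  uedges :: "('a \<times> 'a) set"

definition adj :: "'a pdag \<Rightarrow> 'a \<Rightarrow> 'a \<Rightarrow> bool" where
  "adj G a b \<longleftrightarrow> (a, b) \<in> dedges G \<or> (b, a) \<in> dedges G \<or> (a, b) \<in> uedges G \<or> (b, a) \<in> uedges G"

definition is_dag :: "'a pdag \<Rightarrow> bool" where
  "is_dag D \<longleftrightarrow> finite (nodes D) \<and> dedges D \<subseteq> nodes D \<times> nodes D
      \<and> uedges D = {} \<and> acyclic (dedges D)"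

definition skeleton :: "'a pdag \<Rightarrow> ('a \<times> 'a) set" where
  "skeleton G = {(a, b). adj G a b}"

definition vstructs :: "'a pdag \<Rightarrow> ('a \<times> 'a \<times> 'a) set" where
  "vstructs G = {(a, c, b). (a, c) \<in> dedges G \<and> (b, c) \<in> dedges G \<and> a \<noteq> b \<and> \<not> adj G a b}"

text \<open>Markov equivalence of DAGs, via the Verma--Pearl characterisation
  (same skeleton and same v-structures).\<close>
definition markov_equiv :: "'a pdag \<Rightarrow> 'a pdag \<Rightarrow> bool" where
  "markov_equiv D D' \<longleftrightarrow> is_dag D \<and> is_dag D' \<and> nodes D = nodes D'
      \<and> skeleton D = skeleton D' \<and> vstructs D = vstructs D'"

definition cpdag :: "'a pdag \<Rightarrow> 'a pdag" where
  "cpdag D = \<lparr> nodes = nodes D,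
     dedges = {(a, b). (a, b) \<in> dedges D \<and> (\<forall>D'. markov_equiv D D' \<longrightarrow> (a, b) \<in> dedges D')},
     uedges = {(a, b). adj D a b \<and>
                 \<not> (\<forall>D'. markov_equiv D D' \<longrightarrow> (a, b) \<in> dedges D') \<and>
                 \<not> (\<forall>D'. markov_equiv D D' \<longrightarrow> (b, a) \<in> dedges D')} \<rparr>"

definition und :: "'a pdag \<Rightarrow> 'a \<Rightarrow> 'a \<Rightarrow> bool" where
  "und G a b \<longleftrightarrow> (a, b) \<in> uedges G"

definition orient_edge :: "'a pdag \<Rightarrow> 'a \<Rightarrow> 'a \<Rightarrow> 'a pdag" where
  "orient_edge G a b = G \<lparr> dedges := insert (a, b) (dedges G),
                            uedges := uedges G - {(a, b), (b, a)} \<rparr>"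

definition meek_R1 :: "'a pdag \<Rightarrow> 'a \<Rightarrow> 'a \<Rightarrow> bool" where
  "meek_R1 G a b \<longleftrightarrow> und G a b \<and> (\<exists>c. (c, a) \<in> dedges G \<and> c \<noteq> b \<and> \<not> adj G c b)"

definition meek_R2 :: "'a pdag \<Rightarrow> 'a \<Rightarrow> 'a \<Rightarrow> bool" where
  "meek_R2 G a b \<longleftrightarrow> und G a b \<and> (\<exists>c. (a, c) \<in> dedges G \<and> (c, b) \<in> dedges G)"

definition meek_R3 :: "'a pdag \<Rightarrow> 'a \<Rightarrow> 'a \<Rightarrow> bool" where
  "meek_R3 G a b \<longleftrightarrow> und G a b \<and> (\<exists>c d. und G a c \<and> (c, b) \<in> dedges G
       \<and> und G a d \<and> (d, b) \<in> dedges G \<and> c \<noteq> d \<and> \<not> adj G c d)"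

definition meek_R4 :: "'a pdag \<Rightarrow> 'a \<Rightarrow> 'a \<Rightarrow> bool" where
  "meek_R4 G a b \<longleftrightarrow> und G a b \<and> (\<exists>c d. und G a c \<and> (c, d) \<in> dedges G
       \<and> (d, b) \<in> dedges G \<and> adj G a d \<and> c \<noteq> b \<and> \<not> adj G c b)"

definition meek_step :: "'a pdag \<Rightarrow> 'a pdag \<Rightarrow> bool" where
  "meek_step G G' \<longleftrightarrow> (\<exists>a b. (meek_R1 G a b \<or> meek_R2 G a b \<or> meek_R3 G a b \<or> meek_R4 G a b)
                          \<and> G' = orient_edge G a b)"

definition meek_closure :: "'a pdag \<Rightarrow> 'a pdag \<Rightarrow> bool" where
  "meek_closure G G' \<longleftrightarrow> meek_step\<^sup>*\<^sup>* G G' \<and> \<not> (\<exists>G''. meek_step G' G'')"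

definition orient_set :: "'a pdag \<Rightarrow> ('a \<times> 'a) set \<Rightarrow> 'a pdag" where
  "orient_set G Or = G \<lparr> dedges := dedges G \<union> Or, uedges := uedges G - (Or \<union> Or\<inverse>) \<rparr>"

text \<open>G is an MPDAG: take the CPDAG of (the Markov equivalence class of) a DAG D,
  orient some of its undirected edges (consistently with a member of the class,
  i.e. background knowledge consistent with the CPDAG), close under Meek's rules,
  and the result has no directed cycle.\<close>
definition is_mpdag :: "'a pdag \<Rightarrow> bool" where
  "is_mpdag G \<longleftrightarrow> (\<exists>D Or. is_dag D \<and> Or \<subseteq> uedges (cpdag D) \<and> Or \<subseteq> dedges D
       \<and> meek_closure (orient_set (cpdag D) Or) G) \<and> acyclic (dedges G)"

definition is_path :: "'a pdag \<Rightarrow> 'a list \<Rightarrow> bool" where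
  "is_path G p \<longleftrightarrow> p \<noteq> [] \<and> distinct p \<and> set p \<subseteq> nodes G
      \<and> (\<forall>i. Suc i < length p \<longrightarrow> adj G (p ! i) (p ! Suc i))"

definition is_directed_path :: "'a pdag \<Rightarrow> 'a list \<Rightarrow> bool" where
  "is_directed_path G q \<longleftrightarrow> q \<noteq> [] \<and> distinct q \<and> set q \<subseteq> nodes G
      \<and> (\<forall>i. Suc i < length q \<longrightarrow> (q ! i, q ! Suc i) \<in> dedges G)"

definition possibly_causal :: "'a pdag \<Rightarrow> 'a list \<Rightarrow> bool" where
  "possibly_causal G p \<longleftrightarrow> (\<forall>i j. i < j \<and> j < length p \<longrightarrow> (p ! j, p ! i) \<notin> dedges G)"

end

theory Submission
  imports Defs
begin

text \<open>Take a shortest possibly causal path \<open>s = \<langle>r\<^sub>0, r\<^sub>1, \<dots>, r\<^sub>m\<rangle>\<close> admitting a directed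
  path \<open>r\<^sub>m \<rightarrow> \<dots> \<rightarrow> c \<rightarrow> r\<^sub>0\<close> back, and among those one whose directed path is shortest.
  Minimality forbids directed paths between inner nodes and endpoints of \<open>s\<close>.  Closure
  under R1 and R2 then forces \<open>r\<^sub>0 - r\<^sub>1\<close> and \<open>c - r\<^sub>1\<close> to be undirected, so
  \<open>\<langle>c, r\<^sub>1, \<dots>, r\<^sub>m\<rangle>\<close> is a possibly causal path of the same length with a shorter directed
  path back, unless \<open>r\<^sub>m \<rightarrow> c\<close>; in that case R1 and R4 force \<open>r\<^sub>0 - r\<^sub>m\<close>, and
  \<open>\<langle>r\<^sub>0, r\<^sub>m\<rangle>\<close> is a shorter counterexample.  The converse direction is immediate, since a
  backward edge is a directed path.\<close>

fun pc_path :: "'a pdag \<Rightarrow> 'a list \<Rightarrow> bool" where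
  "pc_path G [] = True"
| "pc_path G (x # xs) \<longleftrightarrow> x \<notin> set xs \<and> (xs \<noteq> [] \<longrightarrow> adj G x (hd xs))
      \<and> (\<forall>y\<in>set xs. (y, x) \<notin> dedges G) \<and> pc_path G xs"

lemma pc_path_distinct: "pc_path G xs \<Longrightarrow> distinct xs"
  by (induction xs) auto

lemma pc_path_appendD: "pc_path G (xs @ ys) \<Longrightarrow> pc_path G xs \<and> pc_path G ys"
  by (induction xs) auto

lemma pc_path_if_possibly_causal:
  assumes "is_path G p" and "possibly_causal G p"
  shows "pc_path G p"
  using assms
proof (induction p)
  case Nil
  then show ?case by simp
next
  case (Cons x xs)
  have tail: "pc_path G xs"
  proof (cases "xs = []")
    case False
    have "is_path G xs"
      using Cons.prems(1) False unfolding is_path_def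
      by (metis Suc_less_eq distinct.simps(2) length_Cons nth_Cons_Suc set_subset_Cons
          subset_trans)
    moreover have "possibly_causal G xs"
      using Cons.prems(2) unfolding possibly_causal_def
      by (metis Suc_less_eq length_Cons nth_Cons_Suc)
    ultimately show ?thesis by (rule Cons.IH)
  qed simp
  have "xs \<noteq> [] \<longrightarrow> adj G x (hd xs)"
    using Cons.prems(1) unfolding is_path_def by (auto simp: hd_conv_nth)
  moreover have "(y, x) \<notin> dedges G" if "y \<in> set xs" for y
    using Cons.prems(2) that unfolding possibly_causal_def
    by (metis Suc_less_eq in_set_conv_nth length_Cons nth_Cons_0 nth_Cons_Suc zero_less_Suc)
  ultimately show ?case
    using tail Cons.prems(1) unfolding is_path_def by simp
qed

lemma pc_path_segment:
  assumes "pc_path G p" and "i \<le> j" and "j < length p"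
  obtains s where "pc_path G s" "s \<noteq> []" "hd s = p ! i" "last s = p ! j"
proof
  let ?s = "take (Suc (j - i)) (drop i p)"
  have "pc_path G (drop i p)"
    using pc_path_appendD[of G "take i p"] assms(1) by simp
  then show "pc_path G ?s"
    using pc_path_appendD[of G ?s] by (metis append_take_drop_id)
  show "?s \<noteq> []" "hd ?s = p ! i" "last ?s = p ! j"
    using assms(2,3) by (auto simp: hd_drop_conv_nth last_conv_nth)
qed

lemma directed_path_rtrancl:
  assumes "is_directed_path G q"
  shows "(hd q, last q) \<in> (dedges G)\<^sup>*"
proof -
  have steps: "(q ! k, q ! Suc k) \<in> dedges G" if "Suc k < length q" for k
    using assms that unfolding is_directed_path_def by blast
  have "(q ! 0, q ! k) \<in> (dedges G)\<^sup>*" if "k < length q" for k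
    using that by (induction k) (auto intro: rtrancl_into_rtrancl steps)
  then show ?thesis
    using assms unfolding is_directed_path_def by (simp add: hd_conv_nth last_conv_nth)
qed

lemma directed_path_edge:
  assumes "(a, b) \<in> dedges G" and "a \<noteq> b" and "a \<in> nodes G" and "b \<in> nodes G"
  shows "is_directed_path G [a, b]"
  using assms unfolding is_directed_path_def by (auto simp: less_Suc_eq)

lemma sym_uedges_cpdag: "sym (uedges (cpdag D))"
  unfolding cpdag_def sym_def adj_def by auto

lemma sym_uedges_orient_set: "sym (uedges G) \<Longrightarrow> sym (uedges (orient_set G Or))"
  unfolding orient_set_def sym_def by auto

lemma sym_uedges_meek_steps: "meek_step\<^sup>*\<^sup>* G G' \<Longrightarrow> sym (uedges G) \<Longrightarrow> sym (uedges G')"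
  by (induction rule: rtranclp_induct) (auto simp: meek_step_def orient_edge_def sym_def)

locale meek_closed =
  fixes G :: "'a pdag"
  assumes sym_uedges: "sym (uedges G)"
    and acyclic_dedges: "acyclic (dedges G)"
    and no_meek_R1: "\<not> meek_R1 G a b"
    and no_meek_R2: "\<not> meek_R2 G a b"
    and no_meek_R4: "\<not> meek_R4 G a b"

lemma mpdag_meek_closed:
  assumes "is_mpdag G"
  shows "meek_closed G"
proof
  obtain D Or where closure: "meek_closure (orient_set (cpdag D) Or) G"
    using assms unfolding is_mpdag_def by blast
  then show "sym (uedges G)"
    unfolding meek_closure_def
    by (meson sym_uedges_cpdag sym_uedges_orient_set sym_uedges_meek_steps)
  show "acyclic (dedges G)"
    using assms unfolding is_mpdag_def by blast
  fix a b
  have "\<not> meek_step G (orient_edge G a b)"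
    using closure unfolding meek_closure_def by blast
  then show "\<not> meek_R1 G a b" "\<not> meek_R2 G a b" "\<not> meek_R4 G a b"
    unfolding meek_step_def by blast+
qed

context meek_closed
begin

lemma no_directed_cycle: "(x, x) \<notin> (dedges G)\<^sup>+"
  using acyclic_dedges unfolding acyclic_def by blast

lemma und_if_adj:
  assumes "adj G a b" and "(a, b) \<notin> dedges G" and "(b, a) \<notin> dedges G"
  shows "und G a b" "und G b a"
  using assms sym_uedges unfolding adj_def und_def sym_def by blast+

text \<open>The minimality hypothesis of the induction on the length of the path.\<close>

definition back_path_free_below :: "nat \<Rightarrow> bool" where
  "back_path_free_below n \<longleftrightarrow>
     (\<forall>s. pc_path G s \<and> s \<noteq> [] \<and> length s < n \<longrightarrow> (last s, hd s) \<notin> (dedges G)\<^sup>+)"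

lemma inner_not_ancestor_of_hd:
  assumes "back_path_free_below (length s)" and "pc_path G s"
    and "y \<in> set s" and "y \<noteq> hd s" and "y \<noteq> last s"
  shows "(y, hd s) \<notin> (dedges G)\<^sup>+"
proof -
  obtain xs ys where s: "s = xs @ y # ys"
    using assms(3) by (meson split_list)
  with assms(4,5) have "xs \<noteq> []" "ys \<noteq> []" by auto
  moreover have "pc_path G (xs @ [y])"
    using assms(2) pc_path_appendD[of G "xs @ [y]" ys] s by simp
  moreover have "length (xs @ [y]) < length s" "hd (xs @ [y]) = hd s"
    using s \<open>ys \<noteq> []\<close> \<open>xs \<noteq> []\<close> by auto
  ultimately show ?thesis
    using assms(1) unfolding back_path_free_below_def by fastforce
qed

lemma last_not_ancestor_of_inner:
  assumes "back_path_free_below (length s)" and "pc_path G s"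
    and "y \<in> set s" and "y \<noteq> hd s" and "y \<noteq> last s"
  shows "(last s, y) \<notin> (dedges G)\<^sup>+"
proof -
  obtain xs ys where s: "s = xs @ y # ys"
    using assms(3) by (meson split_list)
  with assms(4,5) have "xs \<noteq> []" "ys \<noteq> []" by auto
  moreover have "pc_path G (y # ys)"
    using assms(2) pc_path_appendD[of G xs "y # ys"] s by simp
  moreover have "length (y # ys) < length s" "last (y # ys) = last s"
    using s \<open>ys \<noteq> []\<close> \<open>xs \<noteq> []\<close> by auto
  ultimately show ?thesis
    using assms(1) unfolding back_path_free_below_def by fastforce
qed

lemma back_path_first_edges_undirected:
  assumes free: "back_path_free_below (length s)" and pc: "pc_path G s"
    and s: "s = r0 # r1 # rest"
    and last_c: "(last s, c) \<in> (dedges G)\<^sup>+" and c_r0: "(c, r0) \<in> dedges G"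
  shows "und G r1 r0" and "und G c r1" and "(r1, c) \<notin> dedges G"
proof -
  have distinct: "distinct s"
    using pc by (rule pc_path_distinct)
  have last_r1: "(last s, r1) \<notin> (dedges G)\<^sup>+"
  proof (cases "rest = []")
    case True
    then show ?thesis using s no_directed_cycle by simp
  next
    case False
    then have "r1 \<noteq> last s"
      using distinct s by (cases rest rule: rev_cases) auto
    then show ?thesis
      using last_not_ancestor_of_inner[OF free pc, of r1] distinct s False by auto
  qed
  have "(r0, r1) \<notin> dedges G" "(r1, r0) \<notin> dedges G"
    using last_r1 last_c c_r0 pc s by (auto intro: trancl_into_trancl)
  moreover have "adj G r0 r1"
    using pc s by simp
  ultimately have und_01: "und G r0 r1" and und_10: "und G r1 r0"
    using und_if_adj by blast+
  show "und G r1 r0" by (fact und_10)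
  have "c \<noteq> r1"
    using c_r0 \<open>(r1, r0) \<notin> dedges G\<close> by blast
  then have "adj G c r1"
    using no_meek_R1[of r0 r1] und_01 c_r0 unfolding meek_R1_def by blast
  moreover show "(r1, c) \<notin> dedges G"
    using no_meek_R2[of r1 r0] und_10 c_r0 unfolding meek_R2_def by blast
  moreover have "(c, r1) \<notin> dedges G"
    using last_r1 last_c by (auto intro: trancl_into_trancl)
  ultimately show "und G c r1"
    using und_if_adj by blast
qed

lemma back_path_no_shortcut_from_last:
  assumes free: "back_path_free_below (length s)" and pc: "pc_path G s"
    and s: "s = r0 # r1 # rest" and "rest \<noteq> []"
    and last_c: "(last s, c) \<in> dedges G" and c_r0: "(c, r0) \<in> dedges G"
  shows False
proof -
  let ?m = "last s"
  have und_10: "und G r1 r0" and und_c1: "und G c r1"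
    using back_path_first_edges_undirected[OF free pc s _ c_r0] last_c by blast+
  have distinct: "distinct s"
    using pc by (rule pc_path_distinct)
  have "?m \<in> set rest"
    using \<open>rest \<noteq> []\<close> s by simp
  then have m: "?m \<in> set rest" "?m \<noteq> r1" "?m \<noteq> r0"
    using distinct s by auto
  have "adj G ?m r1"
    using no_meek_R1[of c r1] und_c1 last_c m(2) unfolding meek_R1_def by blast
  moreover have "(?m, r1) \<notin> dedges G"
    using pc s m(1) by simp
  moreover have "(r1, ?m) \<notin> dedges G"
  proof
    assume "(r1, ?m) \<in> dedges G"
    then have "(r1, r0) \<in> (dedges G)\<^sup>+"
      using last_c c_r0 by auto
    then show False
      using inner_not_ancestor_of_hd[OF free pc, of r1] distinct m(2) s by auto
  qed
  ultimately have "und G r1 ?m"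
    using und_if_adj by blast
  moreover have "adj G r1 c"
    using und_c1 unfolding und_def adj_def by blast
  ultimately have "adj G ?m r0"
    using no_meek_R4[of r1 r0] und_10 last_c c_r0 m(3) unfolding meek_R4_def by blast
  then have "adj G r0 ?m"
    unfolding adj_def by blast
  then have "pc_path G [r0, ?m]"
    using m(1,3) pc s by auto
  moreover have "length [r0, ?m] < length s"
    using s \<open>rest \<noteq> []\<close> by (cases rest) auto
  moreover have "(?m, r0) \<in> (dedges G)\<^sup>+"
    using last_c c_r0 by auto
  ultimately show False
    using free unfolding back_path_free_below_def by fastforce
qed

lemma back_path_shift:
  assumes free: "back_path_free_below (length s)" and pc: "pc_path G s"
    and s: "s = r0 # r1 # rest"
    and last_c: "(last s, c) \<in> (dedges G)\<^sup>+" and c_r0: "(c, r0) \<in> dedges G"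
  obtains s' where "pc_path G s'" "length s' = length s" "hd s' = c" "last s' = last s"
proof -
  have und_c1: "und G c r1" and r1_c: "(r1, c) \<notin> dedges G"
    using back_path_first_edges_undirected[OF free pc s last_c c_r0] by blast+
  have "c \<noteq> r1"
    using c_r0 pc s by auto
  have adj_c1: "adj G c r1"
    using und_c1 unfolding und_def adj_def by blast
  consider "rest = []" | "rest \<noteq> []" "(last s, c) \<notin> dedges G"
    using back_path_no_shortcut_from_last[OF free pc s _ _ c_r0] by blast
  then show thesis
  proof cases
    case 1
    then show thesis
      using that[of "[c, r1]"] s \<open>c \<noteq> r1\<close> adj_c1 r1_c by simp
  next
    case 2
    have distinct: "distinct s"
      using pc by (rule pc_path_distinct)
    have "(c, r0) \<in> (dedges G)\<^sup>+" "c \<noteq> r0" "c \<noteq> last s"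
      using c_r0 no_directed_cycle last_c by auto
    then have c_outside: "c \<notin> set (r1 # rest)"
      using inner_not_ancestor_of_hd[OF free pc, of c] s by auto
    have "(y, c) \<notin> dedges G" if "y \<in> set (r1 # rest)" for y
    proof
      assume y_c: "(y, c) \<in> dedges G"
      then have "y \<noteq> last s"
        using 2 by blast
      moreover have "(y, r0) \<in> (dedges G)\<^sup>+"
        using y_c c_r0 by auto
      moreover have "y \<noteq> r0"
        using that distinct s by auto
      ultimately show False
        using inner_not_ancestor_of_hd[OF free pc, of y] that s by auto
    qed
    then have "pc_path G (c # r1 # rest)"
      using c_outside adj_c1 pc s by simp
    then show thesis
      using that[of "c # r1 # rest"] s by simp
  qed
qed

lemma pc_path_no_back_path:
  assumes "pc_path G s" and "s \<noteq> []"
  shows "(last s, hd s) \<notin> (dedges G)\<^sup>+"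
  using assms
proof (induction "length s" arbitrary: s rule: less_induct)
  case less
  have free: "back_path_free_below (length s)"
    using less.hyps unfolding back_path_free_below_def by blast
  txt \<open>Induction along the directed path back; \<open>back_path_shift\<close> moves the head of \<open>s\<close>
    one step down this path.\<close>
  have "False" if "(last s, z) \<in> (dedges G)\<^sup>+" "pc_path G s'" "length s' = length s"
      "hd s' = z" "last s' = last s" for s' z
    using that
  proof (induction arbitrary: s' rule: trancl_induct)
    case (base z)
    from base.prems less.prems obtain t where s': "s' = z # t"
      by (cases s') auto
    show ?case
    proof (cases "t = []")
      case True
      then show ?thesis
        using base s' no_directed_cycle by auto
    next
      case False
      then have "last s \<in> set t"
        using base.prems s' by (metis last_ConsR last_in_set)
      then show ?thesis
        using base s' by auto
    qed
  next
    case (step y z)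
    show ?case
    proof (cases s')
      case Nil
      then show ?thesis using step.prems less.prems by simp
    next
      case (Cons r0 t)
      show ?thesis
      proof (cases t)
        case Nil
        then show ?thesis
          using step Cons no_directed_cycle by (auto intro: trancl_into_trancl)
      next
        case (Cons r1 rest)
        obtain s'' where "pc_path G s''" "length s'' = length s" "hd s'' = y" "last s'' = last s"
          using back_path_shift[of s' r0 r1 rest y] free step \<open>s' = r0 # t\<close> Cons by auto
        then show ?thesis
          using step.IH by blast
      qed
    qed
  qed
  then show ?case
    using less.prems by blast
qed

lemma possibly_causal_no_back_trancl:
  assumes "is_path G p" and "possibly_causal G p" and "i < j" and "j < length p"
  shows "(p ! j, p ! i) \<notin> (dedges G)\<^sup>+"
proof -
  obtain s where "pc_path G s" "s \<noteq> []" "hd s = p ! i" "last s = p ! j"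
    using pc_path_segment[OF pc_path_if_possibly_causal[OF assms(1,2)], of i j] assms(3,4)
    by auto
  then show ?thesis
    using pc_path_no_back_path by metis
qed

end

lemma directed_path_back_edge:
  assumes "is_path G p" and "i < j" and "j < length p" and "(p ! j, p ! i) \<in> dedges G"
  shows "is_directed_path G [p ! j, p ! i]"
proof (rule directed_path_edge)
  show "p ! j \<noteq> p ! i" "p ! j \<in> nodes G" "p ! i \<in> nodes G"
    using assms(1-3) unfolding is_path_def by (auto simp: nth_eq_iff_index_eq)
qed (fact assms(4))

theorem mainTheorem17:
  fixes G :: "'a pdag" and p :: "'a list"
  assumes "is_mpdag G" and "is_path G p"
  shows "possibly_causal G p \<longleftrightarrow>
    (\<forall>i j. i < j \<and> j < length p \<longrightarrow>
       \<not> (\<exists>q. is_directed_path G q \<and> hd q = p ! j \<and> last q = p ! i))"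
proof (intro iffI allI impI notI)
  fix i j
  assume pc: "possibly_causal G p" and ij: "i < j \<and> j < length p"
    and "\<exists>q. is_directed_path G q \<and> hd q = p ! j \<and> last q = p ! i"
  then have "(p ! j, p ! i) \<in> (dedges G)\<^sup>*"
    using directed_path_rtrancl by metis
  moreover have "p ! j \<noteq> p ! i"
    using assms(2) ij unfolding is_path_def by (simp add: nth_eq_iff_index_eq)
  moreover have "(p ! j, p ! i) \<notin> (dedges G)\<^sup>+"
    using meek_closed.possibly_causal_no_back_trancl[OF mpdag_meek_closed] assms pc ij by blast
  ultimately show False
    by (simp add: rtrancl_eq_or_trancl)
next
  assume "\<forall>i j. i < j \<and> j < length p \<longrightarrow>
       \<not> (\<exists>q. is_directed_path G q \<and> hd q = p ! j \<and> last q = p ! i)"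
  then show "possibly_causal G p"
    using directed_path_back_edge[OF assms(2)] unfolding possibly_causal_def
    by (metis last_ConsL last_ConsR list.discI list.sel(1))
qed

end
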